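(* There exist a compact set $\mathcal A\subseteq\mathbb R^2$ with $\lambda^2(\mathcal A)=1/4$ and a $C^\infty$-function $\kappa\colon\mathbb R^2\to\mathbb R$ that is one-to-one on $\mathcal A$.
   Context: $\lambda^2$ denotes Lebesgue measure on $\mathbb R^2$. *)

theory Defs
  imports "HOL-Analysis.Analysis"
begin

fun iter_deriv :: "('a::real_normed_vector \<Rightarrow> real) \<Rightarrow> 'a list \<Rightarrow> 'a \<Rightarrow> real" where
  "iter_deriv f [] = f"
| "iter_deriv f (v # vs) = (\<lambda>x. frechet_derivative (iter_deriv f vs) (at x) v)"

definition smooth :: "('a::real_normed_vector \<Rightarrow> real) \<Rightarrow> bool" where
  "smooth f \<longleftrightarrow> (\<forall>vs x. iter_deriv f vs differentiable (at x))"

end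

theory Submission
  imports Defs "HOL-Computational_Algebra.Polynomial"
begin

text \<open>A point \<open>(x, y)\<close> of the unit square is sent to a weighted sum of the binary digits
  of \<open>x\<close> and \<open>y\<close>, interleaved.  The \<open>n\<close>-th digit of \<open>x\<close> is read off smoothly as
  \<open>smooth_step (sin (2 * pi * 2 ^ n * x) / sin (2 * pi * r\<^sub>n))\<close>, which is exact as long as
  \<open>x\<close> keeps distance \<open>r\<^sub>n / 2 ^ n\<close> from the dyadic rationals of level \<open>n + 1\<close>; removing
  strips around them from the unit square leaves a compact set of measure at least \<open>1/4\<close>,
  which is then rescaled.  The weights decay fast enough to make the series \<open>C\<^sup>\<infinity>\<close> and
  are superdecreasing, so the sum determines the digits and hence the point.\<close>

section \<open>Smooth functions of one real variable\<close>

fun Ck :: "nat \<Rightarrow> (real \<Rightarrow> real) \<Rightarrow> bool" where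
  "Ck 0 f \<longleftrightarrow> True"
| "Ck (Suc k) f \<longleftrightarrow> (\<forall>x. f field_differentiable at x) \<and> Ck k (deriv f)"

definition Cinf :: "(real \<Rightarrow> real) \<Rightarrow> bool" where
  "Cinf f \<longleftrightarrow> (\<forall>k. Ck k f)"

lemma Ck_SucD: "Ck (Suc k) f \<Longrightarrow> Ck k f"
  by (induction k arbitrary: f) auto

lemma Ck_const: "Ck k (\<lambda>x. c)"
  by (induction k arbitrary: c) (auto simp: field_differentiable_const)

lemma Ck_ident: "Ck k (\<lambda>x. x)"
  by (cases k) (auto simp: field_differentiable_ident Ck_const)

lemma Ck_add: "Ck k f \<Longrightarrow> Ck k g \<Longrightarrow> Ck k (\<lambda>x. f x + g x)"
proof (induction k arbitrary: f g)
  case (Suc k)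
  have "deriv (\<lambda>x. f x + g x) = (\<lambda>x. deriv f x + deriv g x)"
    using Suc.prems by (intro ext deriv_add) auto
  then show ?case using Suc by (auto intro: field_differentiable_add)
qed simp

lemma Ck_mult: "Ck k f \<Longrightarrow> Ck k g \<Longrightarrow> Ck k (\<lambda>x. f x * g x)"
proof (induction k arbitrary: f g)
  case (Suc k)
  have "deriv (\<lambda>x. f x * g x) = (\<lambda>x. f x * deriv g x + deriv f x * g x)"
    using Suc.prems by (intro ext deriv_mult) auto
  moreover have "Ck k (\<lambda>x. f x * deriv g x + deriv f x * g x)"
    using Suc Ck_SucD by (intro Ck_add) auto
  moreover have "(\<lambda>x. f x * g x) field_differentiable at x" for x
    using Suc.prems by (auto intro: field_differentiable_mult)
  ultimately show ?case by simp
qed simp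

lemma Ck_compose: "Ck k f \<Longrightarrow> Ck k g \<Longrightarrow> Ck k (\<lambda>x. f (g x))"
proof (induction k arbitrary: f g)
  case (Suc k)
  have "deriv (\<lambda>x. f (g x)) = (\<lambda>x. deriv f (g x) * deriv g x)"
    using Suc.prems by (intro ext) (simp add: deriv_chain[unfolded o_def])
  moreover have "Ck k (\<lambda>x. deriv f (g x) * deriv g x)"
    using Suc Ck_SucD by (intro Ck_mult) auto
  moreover have "(\<lambda>x. f (g x)) field_differentiable at x" for x
    using Suc.prems field_differentiable_compose[of g x f] by (auto simp: o_def)
  ultimately show ?case by simp
qed simp

lemma Ck_affine: "Ck k (\<lambda>x. a * x + b)"
  by (intro Ck_add Ck_mult Ck_const Ck_ident)

lemma Ck_inverse: "Ck k f \<Longrightarrow> (\<And>x. f x \<noteq> 0) \<Longrightarrow> Ck k (\<lambda>x. inverse (f x))"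
proof (induction k arbitrary: f)
  case (Suc k)
  have "deriv (\<lambda>x. inverse (f x)) = (\<lambda>x. - 1 * deriv f x * (inverse (f x) * inverse (f x)))"
    using Suc.prems by (intro ext) (simp add: deriv_inverse power2_eq_square divide_inverse)
  moreover have "Ck k (\<lambda>x. - 1 * deriv f x * (inverse (f x) * inverse (f x)))"
    using Suc Ck_SucD by (intro Ck_mult Ck_const) auto
  moreover have "(\<lambda>x. inverse (f x)) field_differentiable at x" for x
    using Suc.prems by (auto intro!: field_differentiable_inverse)
  ultimately show ?case by simp
qed simp

lemma Ck_sin_cos: "Ck k sin \<and> Ck k cos"
proof (induction k)
  case (Suc k)
  have ds: "deriv sin = cos" and dc: "deriv cos = (\<lambda>x. - 1 * sin x)"
    by (auto intro!: ext DERIV_imp_deriv derivative_eq_intros)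
  have "Ck k (\<lambda>x. - 1 * sin x)"
    using Suc by (intro Ck_mult Ck_const) auto
  then have "Ck k (deriv sin)" "Ck k (deriv cos)"
    using Suc by (simp_all only: ds dc)
  then show ?case
    using Suc by (auto simp: field_differentiable_within_sin field_differentiable_within_cos)
qed simp

lemma Ck_funpow_deriv: "Ck (j + k) f \<Longrightarrow> Ck k ((deriv ^^ j) f)"
  by (induction j arbitrary: f) (auto simp del: funpow.simps simp: funpow_Suc_right)

lemma Ck_if_funpow_deriv_differentiable:
  "(\<And>j x. (deriv ^^ j) f field_differentiable at x) \<Longrightarrow> Ck k f"
proof (induction k arbitrary: f)
  case (Suc k)
  have "(deriv ^^ j) (deriv f) field_differentiable at x" for j x
    using Suc.prems[of "Suc j" x] by (simp del: funpow.simps add: funpow_Suc_right)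
  then show ?case using Suc.IH Suc.prems[of 0] by simp
qed simp

lemma Cinf_iff_funpow_deriv_differentiable:
  "Cinf f \<longleftrightarrow> (\<forall>j x. (deriv ^^ j) f field_differentiable at x)"
proof
  assume "Cinf f"
  then have "Ck 1 ((deriv ^^ j) f)" for j
    using Ck_funpow_deriv[of j 1 f] unfolding Cinf_def by blast
  then show "\<forall>j x. (deriv ^^ j) f field_differentiable at x" by simp
qed (auto simp: Cinf_def intro: Ck_if_funpow_deriv_differentiable)

lemma Cinf_funpow_deriv_differentiable: "Cinf f \<Longrightarrow> (deriv ^^ j) f field_differentiable at x"
  by (simp add: Cinf_iff_funpow_deriv_differentiable)

lemma Cinf_compose_affine: "Cinf f \<Longrightarrow> Cinf (\<lambda>x. f (a * x + b))"
  unfolding Cinf_def using Ck_compose[OF _ Ck_affine, of _ f a b] by blast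

section \<open>A smooth step function\<close>

definition flat_exp :: "real \<Rightarrow> real" where
  "flat_exp x = (if x > 0 then exp (- 1 / x) else 0)"

definition flat_exp_poly :: "real poly \<Rightarrow> real \<Rightarrow> real" where
  "flat_exp_poly P x = (if x > 0 then poly P (1 / x) * exp (- 1 / x) else 0)"

lemma poly_times_exp_minus_tendsto_0: "((\<lambda>t. poly P t * exp (- t)) \<longlongrightarrow> (0::real)) at_top"
proof -
  have "((\<lambda>t. \<Sum>i\<le>degree P. coeff P i * (t ^ i / exp t)) \<longlongrightarrow> (\<Sum>i\<le>degree P. coeff P i * 0)) at_top"
    by (intro tendsto_sum tendsto_mult tendsto_const tendsto_power_div_exp_0)
  moreover have "poly P t * exp (- t) = (\<Sum>i\<le>degree P. coeff P i * (t ^ i / exp t))" for t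
    by (simp add: poly_altdef exp_minus divide_inverse sum_distrib_right mult.assoc)
  ultimately show ?thesis by simp
qed

lemma flat_exp_poly_has_derivative_0: "(flat_exp_poly P has_real_derivative 0) (at 0)"
proof -
  have "((\<lambda>y. flat_exp_poly P y / y) \<longlongrightarrow> 0) (at 0)"
  proof (rule filterlim_split_at)
    show "((\<lambda>y. flat_exp_poly P y / y) \<longlongrightarrow> 0) (at_left 0)"
      by (rule tendsto_eventually)
        (auto simp: flat_exp_poly_def eventually_at_left_field intro: exI[of _ "-1"])
    have "((\<lambda>y. flat_exp_poly P (inverse y) / inverse y) \<longlongrightarrow> 0) at_top"
      using poly_times_exp_minus_tendsto_0[of "pCons 0 P"]
      by (rule Lim_transform_eventually)
        (auto intro: eventually_mono[OF eventually_gt_at_top[of 0]] simp: flat_exp_poly_def field_simps)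
    then show "((\<lambda>y. flat_exp_poly P y / y) \<longlongrightarrow> 0) (at_right 0)"
      by (simp add: filterlim_at_right_to_top)
  qed
  then show ?thesis
    by (simp add: has_field_derivative_iff flat_exp_poly_def)
qed

lemma flat_exp_poly_has_derivative:
  "(flat_exp_poly P has_real_derivative flat_exp_poly ([:0, 0, 1:] * (P - pderiv P)) x) (at x)"
proof (cases x "0::real" rule: linorder_cases)
  case less
  have "((\<lambda>x. 0) has_real_derivative flat_exp_poly ([:0, 0, 1:] * (P - pderiv P)) x) (at x)"
    using less by (simp add: flat_exp_poly_def)
  then show ?thesis
    by (rule has_field_derivative_transform_within_open[of _ _ _ "{..<0}"])
      (use less in \<open>auto simp: flat_exp_poly_def\<close>)
next
  case equal
  then show ?thesis using flat_exp_poly_has_derivative_0 by (simp add: flat_exp_poly_def)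
next
  case greater
  have "((\<lambda>x. poly P (1 / x) * exp (- 1 / x)) has_real_derivative
      poly (pderiv P) (1 / x) * (- 1 / x\<^sup>2) * exp (- 1 / x) + poly P (1 / x) * (exp (- 1 / x) * (1 / x\<^sup>2))) (at x)"
    using greater
    by (auto intro!: derivative_eq_intros DERIV_chain2[OF poly_DERIV] simp: power2_eq_square field_simps)
  also have "poly (pderiv P) (1 / x) * (- 1 / x\<^sup>2) * exp (- 1 / x) + poly P (1 / x) * (exp (- 1 / x) * (1 / x\<^sup>2))
      = flat_exp_poly ([:0, 0, 1:] * (P - pderiv P)) x"
    using greater by (simp add: flat_exp_poly_def field_simps power2_eq_square)
  finally show ?thesis
    by (rule has_field_derivative_transform_within_open[of _ _ _ "{0<..}"])
      (use greater in \<open>auto simp: flat_exp_poly_def\<close>)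
qed

lemma Ck_flat_exp_poly: "Ck k (flat_exp_poly P)"
proof (induction k arbitrary: P)
  case (Suc k)
  have "deriv (flat_exp_poly P) = flat_exp_poly ([:0, 0, 1:] * (P - pderiv P))"
    by (intro ext DERIV_imp_deriv flat_exp_poly_has_derivative)
  moreover have "flat_exp_poly P field_differentiable at x" for x
    using flat_exp_poly_has_derivative field_differentiable_def by blast
  ultimately show ?case using Suc by simp
qed simp

lemma Ck_flat_exp: "Ck k flat_exp"
proof -
  have "flat_exp = flat_exp_poly 1"
    by (auto simp: flat_exp_def flat_exp_poly_def)
  with Ck_flat_exp_poly show ?thesis by metis
qed

definition smooth_step :: "real \<Rightarrow> real" where
  "smooth_step y = flat_exp (1 - y) / (flat_exp (1 - y) + flat_exp (1 + y))"

lemma Cinf_smooth_step: "Cinf smooth_step"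
  unfolding Cinf_def
proof
  fix k
  have a: "Ck k (\<lambda>y. flat_exp ((- 1) * y + 1))" "Ck k (\<lambda>y. flat_exp (1 * y + 1))"
    by (rule Ck_compose[OF Ck_flat_exp Ck_affine])+
  have "flat_exp (1 - y) + flat_exp (1 + y) > 0" for y
    by (cases "y < 1") (auto simp: flat_exp_def intro: add_pos_pos add_pos_nonneg add_nonneg_pos)
  then have "flat_exp (1 - y) + flat_exp (1 + y) \<noteq> 0" for y
    by (metis less_irrefl)
  then have "Ck k (\<lambda>y. flat_exp ((- 1) * y + 1) * inverse (flat_exp ((- 1) * y + 1) + flat_exp (1 * y + 1)))"
    by (intro Ck_mult[OF a(1)] Ck_inverse Ck_add[OF a]) (auto simp: add.commute)
  then show "Ck k smooth_step"
    by (simp add: smooth_step_def[abs_def] divide_inverse add.commute)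
qed

lemma smooth_step_eq_1: "y \<le> -1 \<Longrightarrow> smooth_step y = 1"
  by (simp add: smooth_step_def flat_exp_def)

lemma smooth_step_eq_0: "1 \<le> y \<Longrightarrow> smooth_step y = 0"
  by (simp add: smooth_step_def flat_exp_def)

lemma Cinf_suminf:
  fixes u :: "nat \<Rightarrow> real \<Rightarrow> real" and w :: "nat \<Rightarrow> real"
  assumes smooth: "\<And>n. Cinf (u n)"
    and bound: "\<And>k R. \<exists>N. \<forall>n\<ge>N. \<forall>x. \<bar>x\<bar> \<le> R \<longrightarrow> \<bar>w n * (deriv ^^ k) (u n) x\<bar> \<le> (1/2) ^ n"
  shows "Cinf (\<lambda>x. \<Sum>n. w n * u n x)"
proof -
  define G where "G k x = (\<Sum>n. w n * (deriv ^^ k) (u n) x)" for k x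
  have G_deriv: "(G k has_field_derivative G (Suc k) x) (at x)" for k x
  proof -
    have "((\<lambda>y. w n * (deriv ^^ k) (u n) y) has_field_derivative w n * (deriv ^^ Suc k) (u n) y)
        (at y within ball x 1)" for n y
    proof -
      have "((deriv ^^ k) (u n) has_field_derivative deriv ((deriv ^^ k) (u n)) y) (at y)"
        using Cinf_funpow_deriv_differentiable[OF smooth] DERIV_deriv_iff_field_differentiable by blast
      then show ?thesis
        by (simp add: DERIV_cmult has_field_derivative_at_within)
    qed
    moreover have "uniformly_convergent_on (ball x 1) (\<lambda>n y. \<Sum>i<n. w i * (deriv ^^ Suc k) (u i) y)"
    proof (rule Weierstrass_m_test'_ev[where M = "\<lambda>n. (1/2) ^ n"])
      obtain N where "\<forall>n\<ge>N. \<forall>y. \<bar>y\<bar> \<le> \<bar>x\<bar> + 1 \<longrightarrow> \<bar>w n * (deriv ^^ Suc k) (u n) y\<bar> \<le> (1/2) ^ n"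
        using bound by blast
      moreover have "\<bar>y\<bar> \<le> \<bar>x\<bar> + 1" if "y \<in> ball x 1" for y
        using that by (auto simp: dist_real_def)
      ultimately show "\<forall>\<^sub>F n in sequentially. \<forall>y\<in>ball x 1. norm (w n * (deriv ^^ Suc k) (u n) y) \<le> (1/2) ^ n"
        unfolding eventually_sequentially by (metis real_norm_def)
    qed (simp add: summable_geometric)
    moreover have "summable (\<lambda>n. w n * (deriv ^^ k) (u n) x)"
    proof (rule summable_comparison_test_ev[where g = "\<lambda>n. (1/2::real) ^ n"])
      obtain N where "\<forall>n\<ge>N. \<forall>y. \<bar>y\<bar> \<le> \<bar>x\<bar> \<longrightarrow> \<bar>w n * (deriv ^^ k) (u n) y\<bar> \<le> (1/2) ^ n"
        using bound by blast
      then show "\<forall>\<^sub>F n in sequentially. norm (w n * (deriv ^^ k) (u n) x) \<le> (1/2) ^ n"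
        unfolding eventually_sequentially by auto
    qed (simp add: summable_geometric)
    ultimately show ?thesis
      unfolding G_def by (intro has_field_derivative_series'(2)[OF convex_ball]) auto
  qed
  have "(deriv ^^ k) (\<lambda>x. \<Sum>n. w n * u n x) = G k" for k
  proof (induction k)
    case (Suc k)
    then show ?case using G_deriv by (auto intro!: ext DERIV_imp_deriv)
  qed (simp add: G_def)
  then show ?thesis
    unfolding Cinf_iff_funpow_deriv_differentiable by (metis G_deriv field_differentiable_def)
qed

section \<open>Series with superdecreasing weights and binary coefficients\<close>

lemma superdecreasing_suminf_eq:
  fixes e c c' :: "nat \<Rightarrow> real"
  assumes pos: "\<And>m. 0 < e m" and dec: "\<And>m. e (Suc m) \<le> e m / 4"
    and c: "\<And>m. c m \<in> {0, 1}" and c': "\<And>m. c' m \<in> {0, 1}"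
    and eq: "(\<Sum>m. e m * c m) = (\<Sum>m. e m * c' m)"
  shows "c = c'"
proof (rule ccontr)
  assume "c \<noteq> c'"
  define d where "d m = c m - c' m" for m
  define M where "M = (LEAST m. d m \<noteq> 0)"
  have "\<exists>m. d m \<noteq> 0" using \<open>c \<noteq> c'\<close> by (auto simp: d_def fun_eq_iff)
  then have "d M \<noteq> 0" unfolding M_def by (rule LeastI_ex)
  then have dM: "\<bar>e M * d M\<bar> = e M"
    using c[of M] c'[of M] pos[of M] by (auto simp: d_def abs_mult)
  have before: "d i = 0" if "i < M" for i
    using not_less_Least[OF that[unfolded M_def]] by simp
  have d_bound: "\<bar>e m * d m\<bar> \<le> e m" for m
    using c[of m] c'[of m] pos[of m] by (auto simp: d_def abs_mult)
  have geometric: "e (m + j) \<le> e m * (1/4) ^ j" for m j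
  proof (induction j)
    case (Suc j)
    then show ?case using dec[of "m + j"] by simp
  qed simp
  have e_summable: "summable e"
    by (rule summable_comparison_test[where g = "\<lambda>m. e 0 * (1/4) ^ m"])
      (use geometric[of 0] pos in \<open>auto intro!: summable_mult summable_geometric simp: less_imp_le\<close>)
  have summable: "summable (\<lambda>m. e m * b m)" if "\<And>m. b m \<in> {0, 1}" for b
  proof (rule summable_comparison_test'[OF e_summable])
    show "norm (e m * b m) \<le> e m" for m
      using that[of m] pos[of m] by auto
  qed
  have tail_summable: "summable (\<lambda>n. \<bar>e (n + Suc M) * d (n + Suc M)\<bar>)"
    by (rule summable_comparison_test'[OF summable_ignore_initial_segment[OF e_summable, of "Suc M"]])
      (use d_bound in simp)
  have d_summable: "summable (\<lambda>m. e m * d m)"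
    using summable_diff[OF summable[of c, OF c] summable[of c', OF c']] by (simp add: d_def right_diff_distrib)
  have "(\<Sum>m. e m * d m) = 0"
    using suminf_diff[OF summable[of c, OF c] summable[of c', OF c']] eq by (simp add: d_def right_diff_distrib)
  moreover have "(\<Sum>m. e m * d m) = (\<Sum>n. e (n + Suc M) * d (n + Suc M)) + (\<Sum>i<Suc M. e i * d i)"
    by (rule suminf_split_initial_segment[OF d_summable])
  moreover have "(\<Sum>i<Suc M. e i * d i) = e M * d M"
    using before by simp
  ultimately have "e M * d M = - (\<Sum>n. e (n + Suc M) * d (n + Suc M))"
    by linarith
  then have "e M = \<bar>\<Sum>n. e (n + Suc M) * d (n + Suc M)\<bar>"
    using dM by simp
  also have "\<dots> \<le> (\<Sum>n. \<bar>e (n + Suc M) * d (n + Suc M)\<bar>)"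
    by (rule summable_rabs[OF tail_summable])
  also have "\<dots> \<le> (\<Sum>n. e M * (1/4) * (1/4) ^ n)"
  proof (rule suminf_le[OF _ tail_summable])
    show "summable (\<lambda>n. e M * (1/4) * (1/4::real) ^ n)"
      by (intro summable_mult summable_geometric) simp
    show "\<bar>e (n + Suc M) * d (n + Suc M)\<bar> \<le> e M * (1/4) * (1/4) ^ n" for n
      using d_bound[of "n + Suc M"] geometric[of M "Suc n"] by (simp add: add.commute)
  qed
  also have "\<dots> = e M / 3"
    by (subst suminf_mult) (auto simp: suminf_geometric)
  finally show False using pos[of M] by simp
qed

section \<open>Binary digits and smooth digit detectors\<close>

definition binary_digit :: "nat \<Rightarrow> real \<Rightarrow> int" where
  "binary_digit n x = \<lfloor>2 ^ (n + 1) * x\<rfloor> - 2 * \<lfloor>2 ^ n * x\<rfloor>"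

lemma binary_digits_inj:
  fixes x y :: real
  assumes floor: "\<lfloor>x\<rfloor> = \<lfloor>y\<rfloor>" and digits: "\<And>n. binary_digit n x = binary_digit n y"
  shows "x = y"
proof (rule ccontr)
  assume "x \<noteq> y"
  have floor_eq: "\<lfloor>2 ^ n * x\<rfloor> = \<lfloor>2 ^ n * y\<rfloor>" for n
  proof (induction n)
    case (Suc n)
    have "\<lfloor>2 ^ Suc n * x\<rfloor> = binary_digit n x + 2 * \<lfloor>2 ^ n * x\<rfloor>"
      by (simp add: binary_digit_def)
    also have "\<dots> = binary_digit n y + 2 * \<lfloor>2 ^ n * y\<rfloor>"
      using digits Suc.IH by simp
    also have "\<dots> = \<lfloor>2 ^ Suc n * y\<rfloor>"
      by (simp add: binary_digit_def)
    finally show ?case .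
  qed (simp add: floor)
  obtain n where n: "(1/2::real) ^ n < \<bar>x - y\<bar>"
    using real_arch_pow_inv[of "\<bar>x - y\<bar>" "1/2"] \<open>x \<noteq> y\<close> by auto
  have "2 ^ n * \<bar>x - y\<bar> = \<bar>2 ^ n * (x - y)\<bar>"
    by (simp add: abs_mult)
  also have "\<dots> = \<bar>2 ^ n * x - 2 ^ n * y\<bar>"
    by (simp add: right_diff_distrib)
  also have "\<dots> < 1"
    using floor_eq[of n] by linarith
  finally show False
    using n by (simp add: field_simps power_one_over)
qed

definition gap_radius :: "nat \<Rightarrow> real" where
  "gap_radius n = (1/2) ^ (n + 7)"

lemma gap_radius_pos: "0 < gap_radius n"
  by (simp add: gap_radius_def)

lemma gap_radius_le: "gap_radius n \<le> 1 / 128"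
proof -
  have "(1/2::real) ^ (n + 7) \<le> (1/2) ^ 7"
    by (rule power_decreasing) auto
  then show ?thesis by (simp add: gap_radius_def power_divide)
qed

definition dyadic_avoiding :: "real \<Rightarrow> bool" where
  "dyadic_avoiding x \<longleftrightarrow> 0 \<le> x \<and> x \<le> 1 \<and>
     (\<forall>n. \<forall>k::int. 0 \<le> k \<and> k \<le> 2 ^ (n + 1) \<longrightarrow> gap_radius n / 2 ^ n \<le> \<bar>x - of_int k / 2 ^ (n + 1)\<bar>)"

lemma dyadic_avoiding_scaled:
  fixes k :: int
  assumes "dyadic_avoiding x" "0 \<le> k" "k \<le> 2 ^ (n + 1)"
  shows "gap_radius n \<le> \<bar>2 ^ n * x - k / 2\<bar>"
proof -
  have "gap_radius n / 2 ^ n \<le> \<bar>x - k / 2 ^ (n + 1)\<bar>"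
    using assms unfolding dyadic_avoiding_def by blast
  also have "\<bar>x - k / 2 ^ (n + 1)\<bar> = \<bar>2 ^ n * x - k / 2\<bar> / 2 ^ n"
    by (simp add: abs_mult[symmetric] field_simps)
  finally show ?thesis by (simp add: divide_right_mono_neg field_simps)
qed

lemma dyadic_avoiding_floor: "dyadic_avoiding x \<Longrightarrow> \<lfloor>x\<rfloor> = 0"
  using dyadic_avoiding_scaled[of x 2 0] gap_radius_pos[of 0]
  by (auto simp: dyadic_avoiding_def floor_eq_iff)

definition digit_detector :: "nat \<Rightarrow> real \<Rightarrow> real" where
  "digit_detector n x = smooth_step (sin (2 * pi * (2 ^ n * x)) / sin (2 * pi * gap_radius n))"

lemma Cinf_digit_detector: "Cinf (digit_detector n)"
  unfolding Cinf_def
proof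
  fix k
  have "Ck k (\<lambda>x. smooth_step (sin ((2 * pi * 2 ^ n) * x + 0) * inverse (sin (2 * pi * gap_radius n))))"
    using Cinf_smooth_step Ck_sin_cos unfolding Cinf_def
    by (intro Ck_compose[OF _ Ck_mult[OF Ck_compose[OF _ Ck_affine] Ck_const]]) auto
  then show "Ck k (digit_detector n)"
    by (simp add: digit_detector_def[abs_def] divide_inverse mult.assoc)
qed

lemma sin_le_sin_symmetric:
  assumes "0 \<le> a" "a \<le> pi / 2" "a \<le> b" "b \<le> pi - a"
  shows "sin a \<le> sin b"
proof (cases "b \<le> pi / 2")
  case True
  then show ?thesis using assms by (intro sin_monotone_2pi_le) auto
next
  case False
  have "sin a \<le> sin (pi - b)" using assms False by (intro sin_monotone_2pi_le) auto
  then show ?thesis by simp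
qed

lemma smooth_step_sin_ratio:
  assumes r: "0 < r" "r \<le> 1/4" and s: "r \<le> s" "s \<le> 1 - r" "r \<le> \<bar>s - 1/2\<bar>"
  shows "smooth_step (sin (2 * pi * s) / sin (2 * pi * r)) = (if s < 1/2 then 0 else 1)"
proof -
  have r_pi: "0 \<le> 2 * pi * r" "2 * pi * r \<le> pi / 2"
    using r pi_gt_zero by (auto simp: field_simps)
  have sin_r: "0 < sin (2 * pi * r)"
    using r_pi r by (intro sin_gt_zero) auto
  show ?thesis
  proof (cases "s < 1/2")
    case True
    then have "2 * pi * r \<le> 2 * pi * s" "2 * pi * s \<le> 2 * pi * (1/2 - r)"
      using s by (auto simp: abs_if)
    then have "sin (2 * pi * r) \<le> sin (2 * pi * s)"
      using r_pi by (intro sin_le_sin_symmetric) (auto simp: algebra_simps)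
    then show ?thesis
      using True sin_r by (simp add: smooth_step_eq_0)
  next
    case False
    then have "2 * pi * r \<le> 2 * pi * (s - 1/2)" "2 * pi * (s - 1/2) \<le> 2 * pi * (1/2 - r)"
      using s by (auto simp: abs_if)
    then have "sin (2 * pi * r) \<le> - sin (2 * pi * s)"
      using r_pi sin_le_sin_symmetric[of "2 * pi * r" "2 * pi * (s - 1/2)"]
      by (simp add: algebra_simps)
    then show ?thesis
      using False sin_r by (simp add: smooth_step_eq_1 divide_le_eq)
  qed
qed

text \<open>With \<open>s\<close> the fractional part of \<open>2 ^ n * x\<close>, the \<open>n\<close>-th digit is \<open>\<lfloor>2 * s\<rfloor>\<close>;
  avoiding the dyadic rationals keeps \<open>s\<close> away from \<open>0\<close>, \<open>1/2\<close> and \<open>1\<close>, so that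
  \<open>\<bar>sin (2 * pi * s)\<bar> \<ge> sin (2 * pi * gap_radius n)\<close> and the step function saturates.\<close>

lemma dyadic_avoiding_digit_detector:
  assumes x: "dyadic_avoiding x"
  shows "binary_digit n x \<in> {0, 1} \<and> digit_detector n x = binary_digit n x"
proof -
  define t where "t = 2 ^ n * x"
  define m where "m = \<lfloor>t\<rfloor>"
  define s where "s = t - m"
  have t: "0 \<le> t" "t \<le> 2 ^ n"
    using x by (auto simp: t_def dyadic_avoiding_def)
  have m: "0 \<le> m" and s: "0 \<le> s" "s < 1" "t = m + s"
    using t unfolding s_def m_def by linarith+
  have "real_of_int m \<le> 2 ^ n"
    using t s by linarith
  then have "m \<le> 2 ^ n"
    by (metis of_int_le_iff of_int_numeral of_int_power)
  then have "gap_radius n \<le> \<bar>t - of_int (2 * m) / 2\<bar>"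
    unfolding t_def using m by (intro dyadic_avoiding_scaled[OF x]) auto
  then have low: "gap_radius n \<le> s"
    using s by simp
  then have "real_of_int m < 2 ^ n"
    using gap_radius_pos[of n] t s by linarith
  then have "m < 2 ^ n"
    by (metis of_int_less_iff of_int_numeral of_int_power)
  then have "2 * m + 2 \<le> 2 ^ (n + 1)"
    by simp
  then have "gap_radius n \<le> \<bar>t - of_int (2 * m + 1) / 2\<bar>" "gap_radius n \<le> \<bar>t - of_int (2 * m + 2) / 2\<bar>"
    unfolding t_def using m by (intro dyadic_avoiding_scaled[OF x]; simp)+
  then have mid: "gap_radius n \<le> \<bar>s - 1/2\<bar>" and high: "s \<le> 1 - gap_radius n"
    using s by (auto simp: field_simps abs_if split: if_splits)
  have "sin (2 * pi * (2 ^ n * x)) = sin (2 * pi * s + 2 * pi * of_int m)"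
    unfolding t_def[symmetric] s(3) by (simp add: algebra_simps)
  also have "\<dots> = sin (2 * pi * s)"
    by (simp add: sin_add)
  finally have "digit_detector n x = (if s < 1/2 then 0 else 1)"
    unfolding digit_detector_def
    using smooth_step_sin_ratio[OF gap_radius_pos _ low high mid] gap_radius_le[of n] by simp
  moreover have "binary_digit n x = (if s < 1/2 then 0 else 1)"
  proof -
    have "2 ^ (n + 1) * x = 2 * s + of_int (2 * m)"
      using s(3) by (simp add: t_def)
    then have "\<lfloor>2 ^ (n + 1) * x\<rfloor> = \<lfloor>2 * s\<rfloor> + 2 * m"
      by (simp only: floor_add_int)
    then have "binary_digit n x = \<lfloor>2 * s\<rfloor>"
      by (simp add: binary_digit_def m_def t_def)
    then show ?thesis
      using s by (simp add: floor_eq_iff)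
  qed
  ultimately show ?thesis by simp
qed

lemma digit_detector_deriv_bounded:
  "\<exists>b\<ge>0. \<forall>x. \<bar>x\<bar> \<le> real n \<longrightarrow> \<bar>(deriv ^^ k) (digit_detector n) x\<bar> \<le> b"
proof -
  have "continuous_on (cball 0 (real n)) ((deriv ^^ k) (digit_detector n))"
    by (intro continuous_at_imp_continuous_on ballI field_differentiable_imp_continuous_at
        Cinf_funpow_deriv_differentiable Cinf_digit_detector)
  then have "bounded ((deriv ^^ k) (digit_detector n) ` cball 0 (real n))"
    by (intro compact_imp_bounded compact_continuous_image) auto
  then obtain b where "\<forall>y\<in>(deriv ^^ k) (digit_detector n) ` cball 0 (real n). \<bar>y\<bar> \<le> b"
    unfolding bounded_real by blast
  then have bound: "\<bar>(deriv ^^ k) (digit_detector n) x\<bar> \<le> b" if "\<bar>x\<bar> \<le> real n" for x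
    using that by auto
  moreover have "0 \<le> b"
    using bound[of 0] by linarith
  ultimately show ?thesis by blast
qed

definition detector_deriv_bound :: "nat \<Rightarrow> nat \<Rightarrow> real" where
  "detector_deriv_bound n k =
     (SOME b. 0 \<le> b \<and> (\<forall>x. \<bar>x\<bar> \<le> real n \<longrightarrow> \<bar>(deriv ^^ k) (digit_detector n) x\<bar> \<le> b))"

lemma detector_deriv_bound:
  "0 \<le> detector_deriv_bound n k"
  "\<bar>x\<bar> \<le> real n \<Longrightarrow> \<bar>(deriv ^^ k) (digit_detector n) x\<bar> \<le> detector_deriv_bound n k"
  using someI_ex[OF digit_detector_deriv_bounded[of n k, unfolded Bex_def]]
  unfolding detector_deriv_bound_def by blast+

definition detector_bound :: "nat \<Rightarrow> real" where
  "detector_bound n = (\<Sum>j\<le>n. \<Sum>k\<le>n. detector_deriv_bound j k)"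

lemma detector_bound_nonneg: "0 \<le> detector_bound n"
  unfolding detector_bound_def by (intro sum_nonneg) (auto simp: detector_deriv_bound)

lemma detector_deriv_bound_le: "k \<le> n \<Longrightarrow> detector_deriv_bound n k \<le> detector_bound n"
  unfolding detector_bound_def
  by (rule order_trans[OF member_le_sum member_le_sum[where f = "\<lambda>j. \<Sum>k\<le>n. detector_deriv_bound j k"]])
    (auto intro!: sum_nonneg simp: detector_deriv_bound)

lemma detector_bound_mono: "m \<le> n \<Longrightarrow> detector_bound m \<le> detector_bound n"
  unfolding detector_bound_def
  by (rule order_trans[OF sum_mono[OF sum_mono2] sum_mono2])
    (auto intro!: sum_nonneg simp: detector_deriv_bound)

text \<open>The weight of the \<open>m\<close>-th term is superdecreasing in \<open>m\<close> and, for \<open>m \<in> {2n, 2n+1}\<close>,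
  small enough to tame the first \<open>n\<close> derivatives of the \<open>n\<close>-th detector on \<open>[-n, n]\<close>.
  Even and odd indices will carry the digits of the two coordinates.\<close>

definition digit_weight :: "nat \<Rightarrow> real" where
  "digit_weight m = (1/4) ^ m / (1 + detector_bound (m div 2))"

lemma digit_weight_pos: "0 < digit_weight m"
  using detector_bound_nonneg[of "m div 2"] by (simp add: digit_weight_def)

lemma digit_weight_Suc_le: "digit_weight (Suc m) \<le> digit_weight m / 4"
proof -
  have "detector_bound (m div 2) \<le> detector_bound (Suc m div 2)"
    by (rule detector_bound_mono) (simp add: div_le_mono)
  then show ?thesis
    using detector_bound_nonneg[of "m div 2"]
    by (simp add: digit_weight_def divide_left_mono)
qed

lemma digit_weight_le_power: "digit_weight m \<le> (1/4) ^ m"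
  using detector_bound_nonneg[of "m div 2"]
  by (simp add: digit_weight_def divide_le_eq mult_le_cancel_left1)

lemma digit_weight_le_detector_bound:
  assumes "m div 2 = n"
  shows "digit_weight m \<le> (1/2) ^ n / (1 + detector_bound n)"
proof -
  have "(1/4::real) ^ m \<le> (1/4) ^ (2 * n)"
    using assms by (intro power_decreasing) auto
  also have "\<dots> = (1/16) ^ n"
    by (simp add: power_mult power2_eq_square)
  also have "\<dots> \<le> (1/2) ^ n"
    by (rule power_mono) auto
  finally show ?thesis
    unfolding digit_weight_def assms using detector_bound_nonneg[of n]
    by (intro divide_right_mono) auto
qed

definition digit_series :: "(nat \<Rightarrow> real) \<Rightarrow> real \<Rightarrow> real" where
  "digit_series w x = (\<Sum>n. w n * digit_detector n x)"

lemma Cinf_digit_series: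
  assumes nonneg: "\<And>n. 0 \<le> w n" and small: "\<And>n. w n \<le> (1/2) ^ n / (1 + detector_bound n)"
  shows "Cinf (digit_series w)"
  unfolding digit_series_def[abs_def]
proof (rule Cinf_suminf[OF Cinf_digit_detector])
  fix k and R :: real
  show "\<exists>N. \<forall>n\<ge>N. \<forall>x. \<bar>x\<bar> \<le> R \<longrightarrow> \<bar>w n * (deriv ^^ k) (digit_detector n) x\<bar> \<le> (1/2) ^ n"
  proof (intro exI[of _ "max k (nat \<lceil>R\<rceil>)"] allI impI)
    fix n x
    assume "max k (nat \<lceil>R\<rceil>) \<le> n" "\<bar>x\<bar> \<le> R"
    then have D: "\<bar>(deriv ^^ k) (digit_detector n) x\<bar> \<le> detector_bound n"
      using detector_deriv_bound(2)[of x n k] detector_deriv_bound_le[of k n] by linarith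
    have T: "0 \<le> detector_bound n"
      by (rule detector_bound_nonneg)
    have "\<bar>w n * (deriv ^^ k) (digit_detector n) x\<bar> \<le> (1/2) ^ n / (1 + detector_bound n) * detector_bound n"
      unfolding abs_mult using nonneg[of n] small[of n] D T by (intro mult_mono) auto
    also have "\<dots> \<le> (1/2) ^ n"
      using T by (simp add: divide_le_eq)
    finally show "\<bar>w n * (deriv ^^ k) (digit_detector n) x\<bar> \<le> (1/2) ^ n" .
  qed
qed

lemma summable_digit_weight:
  assumes "\<And>n. n \<le> f n" and "\<And>n. b n \<in> {0::real, 1}"
  shows "summable (\<lambda>n. digit_weight (f n) * b n)"
proof (rule summable_comparison_test'[OF summable_geometric[of "1/4"]])
  fix n
  have "\<bar>digit_weight (f n) * b n\<bar> \<le> digit_weight (f n)"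
    using assms(2)[of n] digit_weight_pos[of "f n"] by auto
  also have "\<dots> \<le> (1/4) ^ f n"
    by (rule digit_weight_le_power)
  also have "\<dots> \<le> (1/4) ^ n"
    using assms(1)[of n] by (intro power_decreasing) auto
  finally show "norm (digit_weight (f n) * b n) \<le> (1/4) ^ n" by simp
qed simp

lemma digit_detector_inj:
  assumes "dyadic_avoiding x" "dyadic_avoiding y" "\<And>n. digit_detector n x = digit_detector n y"
  shows "x = y"
proof (rule binary_digits_inj)
  show "\<lfloor>x\<rfloor> = \<lfloor>y\<rfloor>"
    using assms dyadic_avoiding_floor by simp
  show "binary_digit n x = binary_digit n y" for n
    using assms dyadic_avoiding_digit_detector[of x n] dyadic_avoiding_digit_detector[of y n]
    by (metis of_int_eq_iff)
qed

lemma suminf_digit_weight_interleave: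
  assumes a: "\<And>n. a n \<in> {0, 1}" and b: "\<And>n. b n \<in> {0, 1}"
  shows "(\<Sum>n. digit_weight (2 * n) * a n) + (\<Sum>n. digit_weight (2 * n + 1) * b n) =
    (\<Sum>m. digit_weight m * (if even m then a (m div 2) else b (m div 2)))"
proof -
  define c where "c m = (if even m then a (m div 2) else b (m div 2))" for m
  have "c m \<in> {0, 1}" for m
    using a b by (simp add: c_def)
  then have "(\<lambda>m. digit_weight m * c m) sums (\<Sum>m. digit_weight m * c m)"
    using summable_digit_weight[of "\<lambda>m. m" c] by (simp add: summable_sums)
  from sums_group[OF this, of 2]
  have "(\<lambda>n. digit_weight (2 * n) * a n + digit_weight (2 * n + 1) * b n) sums (\<Sum>m. digit_weight m * c m)"
    by (simp add: c_def mult.commute atLeastLessThan_nat_numeral)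
  moreover have "(\<Sum>n. digit_weight (2 * n) * a n) + (\<Sum>n. digit_weight (2 * n + 1) * b n) =
      (\<Sum>n. digit_weight (2 * n) * a n + digit_weight (2 * n + 1) * b n)"
    using a b by (intro suminf_add summable_digit_weight) auto
  ultimately show ?thesis
    by (simp add: sums_iff c_def)
qed

lemma digit_series_pair_inj:
  assumes "dyadic_avoiding x" "dyadic_avoiding y" "dyadic_avoiding x'" "dyadic_avoiding y'"
    and eq: "digit_series (\<lambda>n. digit_weight (2 * n)) x + digit_series (\<lambda>n. digit_weight (2 * n + 1)) y =
      digit_series (\<lambda>n. digit_weight (2 * n)) x' + digit_series (\<lambda>n. digit_weight (2 * n + 1)) y'"
  shows "x = x' \<and> y = y'"
proof -
  define c where "c x y m = (if even m then digit_detector (m div 2) x else digit_detector (m div 2) y)"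
    for x y m
  have binary: "digit_detector n z \<in> {0, 1}" if "dyadic_avoiding z" for n z
    using dyadic_avoiding_digit_detector[OF that, of n] by auto
  have interleave: "digit_series (\<lambda>n. digit_weight (2 * n)) x + digit_series (\<lambda>n. digit_weight (2 * n + 1)) y
      = (\<Sum>m. digit_weight m * c x y m)" if "dyadic_avoiding x" "dyadic_avoiding y" for x y
    unfolding digit_series_def c_def
    by (rule suminf_digit_weight_interleave[OF binary[OF that(1)] binary[OF that(2)]])
  have "(\<Sum>m. digit_weight m * c x y m) = (\<Sum>m. digit_weight m * c x' y' m)"
    using eq interleave assms by simp
  then have "c x y = c x' y'"
    using assms binary
    by (intro superdecreasing_suminf_eq[where e = digit_weight, OF digit_weight_pos digit_weight_Suc_le]) (auto simp: c_def)
  then have "c x y (2 * n) = c x' y' (2 * n)" "c x y (2 * n + 1) = c x' y' (2 * n + 1)" for n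
    by simp_all
  then have "digit_detector n x = digit_detector n x'" "digit_detector n y = digit_detector n y'" for n
    unfolding c_def by simp_all
  then show ?thesis
    using assms digit_detector_inj by blast
qed

section \<open>Smooth functions on the plane\<close>

lemma iter_deriv_add:
  assumes "smooth f" "smooth g"
  shows "iter_deriv (\<lambda>x. f x + g x) vs = (\<lambda>x. iter_deriv f vs x + iter_deriv g vs x)"
proof (induction vs)
  case (Cons v vs)
  show ?case
  proof
    fix x
    have "((\<lambda>y. iter_deriv f vs y + iter_deriv g vs y) has_derivative
        (\<lambda>u. frechet_derivative (iter_deriv f vs) (at x) u + frechet_derivative (iter_deriv g vs) (at x) u)) (at x)"
      using assms unfolding smooth_def by (intro has_derivative_add) (simp_all add: frechet_derivative_works)
    then show "iter_deriv (\<lambda>x. f x + g x) (v # vs) x = iter_deriv f (v # vs) x + iter_deriv g (v # vs) x"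
      by (simp add: Cons.IH frechet_derivative_at[symmetric])
  qed
qed simp

lemma smooth_add:
  assumes "smooth f" "smooth g"
  shows "smooth (\<lambda>x. f x + g x)"
  using assms unfolding smooth_def iter_deriv_add[OF assms] by (blast intro: differentiable_add)

lemma has_derivative_compose_vec_nth:
  fixes h :: "real \<Rightarrow> real" and x :: "real^'n"
  assumes "h field_differentiable at (x $ i)"
  shows "((\<lambda>z. h (z $ i)) has_derivative (\<lambda>v. v $ i * deriv h (x $ i))) (at x)"
proof -
  have "(h has_real_derivative deriv h (x $ i)) (at (x $ i))"
    using assms DERIV_deriv_iff_field_differentiable by blast
  moreover have "((\<lambda>z::real^'n. z $ i) has_derivative (\<lambda>v. v $ i)) (at x)"
    by (rule bounded_linear.has_derivative[OF bounded_linear_vec_nth has_derivative_ident])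
  ultimately show ?thesis
    by (rule DERIV_compose_FDERIV)
qed

lemma iter_deriv_vec_nth:
  fixes f :: "real \<Rightarrow> real"
  assumes "Cinf f"
  shows "iter_deriv (\<lambda>z::real^'n. f (z $ i)) vs =
    (\<lambda>z. (deriv ^^ length vs) f (z $ i) * (\<Prod>v\<leftarrow>vs. v $ i))"
proof (induction vs)
  case (Cons v vs)
  show ?case
  proof
    fix x :: "real^'n"
    have "((\<lambda>z. (deriv ^^ length vs) f (z $ i) * (\<Prod>v\<leftarrow>vs. v $ i)) has_derivative
        (\<lambda>v. v $ i * deriv ((deriv ^^ length vs) f) (x $ i) * (\<Prod>v\<leftarrow>vs. v $ i))) (at x)"
      using assms
      by (intro has_derivative_mult_left has_derivative_compose_vec_nth Cinf_funpow_deriv_differentiable)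
    then show "iter_deriv (\<lambda>z. f (z $ i)) (v # vs) x =
        (deriv ^^ length (v # vs)) f (x $ i) * (\<Prod>v\<leftarrow>v # vs. v $ i)"
      by (simp add: Cons.IH frechet_derivative_at[symmetric] mult_ac)
  qed
qed simp

lemma smooth_vec_nth:
  assumes "Cinf f"
  shows "smooth (\<lambda>z::real^'n. f (z $ i))"
  unfolding smooth_def iter_deriv_vec_nth[OF assms] using assms
  by (intro allI differentiableI[OF has_derivative_mult_left[OF has_derivative_compose_vec_nth]]
      Cinf_funpow_deriv_differentiable)

section \<open>A compact square of dyadic-avoiding points\<close>

definition dyadic_strip :: "nat \<Rightarrow> nat \<Rightarrow> 2 \<Rightarrow> (real^2) set" where
  "dyadic_strip n k i =
     box (\<chi> j. if j = i then real k / 2 ^ (n + 1) - gap_radius n / 2 ^ n else -1)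
         (\<chi> j. if j = i then real k / 2 ^ (n + 1) + gap_radius n / 2 ^ n else 2)"

definition dyadic_strips :: "nat \<Rightarrow> (real^2) set" where
  "dyadic_strips n = (\<Union>p \<in> {..2 ^ (n + 1)} \<times> UNIV. dyadic_strip n (fst p) (snd p))"

definition avoiding_square :: "(real^2) set" where
  "avoiding_square = cbox 0 (\<chi> j. 1) - (\<Union>n. dyadic_strips n)"

lemma dyadic_strip_lmeasurable: "dyadic_strip n k i \<in> lmeasurable"
  unfolding dyadic_strip_def by (intro lmeasurable_open bounded_box open_box)

lemma measure_dyadic_strip: "measure lebesgue (dyadic_strip n k i) \<le> 6 * (gap_radius n / 2 ^ n)"
proof -
  define a b where "a = (\<chi> j. if j = i then real k / 2 ^ (n + 1) - gap_radius n / 2 ^ n else -1)"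
    and "b = (\<chi> j. if j = i then real k / 2 ^ (n + 1) + gap_radius n / 2 ^ n else 2)"
  have "a $ j \<le> b $ j" for j
    using gap_radius_pos[of n] by (auto simp: a_def b_def)
  then have "a \<in> cbox a b"
    by (simp add: mem_box_cart)
  then have "cbox a b \<noteq> {}"
    by blast
  have "measure lebesgue (dyadic_strip n k i) \<le> measure lebesgue (cbox a b)"
    unfolding dyadic_strip_def a_def[symmetric] b_def[symmetric]
    by (intro measure_mono_fmeasurable box_subset_cbox) (auto intro: fmeasurableD lmeasurable_open)
  also have "\<dots> = (\<Prod>j\<in>UNIV. b $ j - a $ j)"
    using content_cbox_cart[OF \<open>cbox a b \<noteq> {}\<close>] by simp
  also have "\<dots> = 6 * (gap_radius n / 2 ^ n)"
    using exhaust_2[of i] by (auto simp: UNIV_2 a_def b_def)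
  finally show ?thesis .
qed

lemma dyadic_strips_lmeasurable: "dyadic_strips n \<in> lmeasurable"
  unfolding dyadic_strips_def dyadic_strip_def
  by (intro lmeasurable_open bounded_UN open_UN ballI bounded_box open_box finite_cartesian_product)
    auto

lemma measure_dyadic_strips: "measure lebesgue (dyadic_strips n) \<le> 48 * gap_radius n"
proof -
  have "measure lebesgue (dyadic_strips n) \<le>
      (\<Sum>p \<in> {..2 ^ (n + 1)} \<times> UNIV. measure lebesgue (dyadic_strip n (fst p) (snd p)))"
    unfolding dyadic_strips_def
    by (rule measure_UNION_le) (auto intro: fmeasurableD dyadic_strip_lmeasurable)
  also have "\<dots> \<le> card ({..(2::nat) ^ (n + 1)} \<times> (UNIV :: 2 set)) * (6 * (gap_radius n / 2 ^ n))"
    by (rule sum_bounded_above) (rule measure_dyadic_strip)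
  also have "\<dots> = (2 * 2 ^ n + 1) * 12 * (gap_radius n / 2 ^ n)"
    by (simp add: card_cartesian_product)
  also have "\<dots> \<le> (4 * 2 ^ n) * 12 * (gap_radius n / 2 ^ n)"
  proof (intro mult_right_mono)
    show "2 * 2 ^ n + 1 \<le> 4 * (2::real) ^ n"
      using one_le_power[of "2::real" n] by linarith
  qed (use gap_radius_pos[of n] in auto)
  also have "\<dots> = 48 * gap_radius n"
    by simp
  finally show ?thesis .
qed

lemma measure_Union_dyadic_strips:
  "(\<Union>n. dyadic_strips n) \<in> lmeasurable \<and> measure lebesgue (\<Union>n. dyadic_strips n) \<le> 3 / 4"
proof -
  have summable: "summable (\<lambda>n. 48 * gap_radius n)"
    unfolding gap_radius_def by (intro summable_mult summable_ignore_initial_segment summable_geometric) simp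
  have "(\<Sum>n. 48 * gap_radius n) = (\<Sum>n. (48 / 128) * (1/2::real) ^ n)"
    by (rule suminf_cong) (simp add: gap_radius_def power_add power_divide)
  also have "\<dots> = 3 / 4"
    by (subst suminf_mult) (auto simp: suminf_geometric)
  finally have sum: "(\<Sum>n. 48 * gap_radius n) = 3 / 4" .
  have bound: "measure lebesgue (\<Union>n\<in>I. dyadic_strips n) \<le> 3 / 4" if "I \<subseteq> UNIV" "finite I" for I
  proof -
    have "measure lebesgue (\<Union>n\<in>I. dyadic_strips n) \<le> (\<Sum>n\<in>I. measure lebesgue (dyadic_strips n))"
      by (rule measure_UNION_le[OF that(2)]) (auto intro: fmeasurableD dyadic_strips_lmeasurable)
    also have "\<dots> \<le> (\<Sum>n\<in>I. 48 * gap_radius n)"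
      by (rule sum_mono) (rule measure_dyadic_strips)
    also have "\<dots> \<le> (\<Sum>n. 48 * gap_radius n)"
      by (rule sum_le_suminf[OF summable that(2)]) (simp add: gap_radius_def)
    finally show ?thesis using sum by simp
  qed
  show ?thesis
    using fmeasurable_UN_bound[OF countableI_type dyadic_strips_lmeasurable bound]
      measure_UN_bound[OF countableI_type dyadic_strips_lmeasurable bound] by simp
qed

lemma compact_avoiding_square: "compact avoiding_square"
proof -
  have "open (\<Union>n. dyadic_strips n)"
    unfolding dyadic_strips_def dyadic_strip_def by (intro open_UN ballI open_box)
  then have "closed avoiding_square"
    unfolding avoiding_square_def by (intro closed_Diff closed_cbox)
  moreover have "bounded avoiding_square"
    unfolding avoiding_square_def by (rule bounded_subset[OF bounded_cbox]) auto
  ultimately show ?thesis by (simp add: compact_eq_bounded_closed)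
qed

lemma measure_avoiding_square: "1 / 4 \<le> measure lebesgue avoiding_square"
proof -
  have "(0::real^2) \<in> cbox 0 (\<chi> j. 1)"
    by (simp add: mem_box_cart)
  then have "cbox (0::real^2) (\<chi> j. 1) \<noteq> {}"
    by blast
  then have "measure lebesgue (cbox (0::real^2) (\<chi> j. 1)) = 1"
    using content_cbox_cart[of 0 "\<chi> j. 1 :: real^2"] by simp
  moreover have "measure lebesgue (cbox (0::real^2) (\<chi> j. 1)) - measure lebesgue (\<Union>n. dyadic_strips n)
      \<le> measure lebesgue avoiding_square"
    unfolding avoiding_square_def using measure_Union_dyadic_strips
    by (intro measure_diff_le_measure_setdiff) auto
  ultimately show ?thesis
    using measure_Union_dyadic_strips by linarith
qed

lemma avoiding_square_dyadic_avoiding: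
  assumes z: "z \<in> avoiding_square"
  shows "dyadic_avoiding (z $ i)"
  unfolding dyadic_avoiding_def
proof (intro conjI allI impI)
  have unit: "0 \<le> z $ j \<and> z $ j \<le> 1" for j
    using z by (auto simp: avoiding_square_def mem_box_cart)
  then show "0 \<le> z $ i" "z $ i \<le> 1" by auto
  have inside: "-1 < z $ j" "z $ j < 2" for j
    using unit[of j] by linarith+
  fix n and k :: int
  assume k: "0 \<le> k \<and> k \<le> 2 ^ (n + 1)"
  show "gap_radius n / 2 ^ n \<le> \<bar>z $ i - of_int k / 2 ^ (n + 1)\<bar>"
  proof (rule ccontr)
    assume "\<not> ?thesis"
    moreover have "real (nat k) = of_int k" "nat k \<le> 2 ^ (n + 1)"
      using k by (simp_all add: nat_le_iff)
    ultimately have "z \<in> dyadic_strip n (nat k) i"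
      unfolding dyadic_strip_def mem_box_cart by (auto simp: abs_less_iff inside)
    then have "z \<in> dyadic_strips n"
      unfolding dyadic_strips_def using \<open>nat k \<le> 2 ^ (n + 1)\<close> by force
    then show False
      using z by (auto simp: avoiding_square_def)
  qed
qed

lemma inj_on_avoiding_square:
  "inj_on (\<lambda>z::real^2. digit_series (\<lambda>n. digit_weight (2 * n)) (z $ 1) +
    digit_series (\<lambda>n. digit_weight (2 * n + 1)) (z $ 2)) avoiding_square"
proof (rule inj_onI)
  fix z w :: "real^2"
  assume "z \<in> avoiding_square" "w \<in> avoiding_square"
    and "digit_series (\<lambda>n. digit_weight (2 * n)) (z $ 1) + digit_series (\<lambda>n. digit_weight (2 * n + 1)) (z $ 2) =
      digit_series (\<lambda>n. digit_weight (2 * n)) (w $ 1) + digit_series (\<lambda>n. digit_weight (2 * n + 1)) (w $ 2)"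
  then have "z $ 1 = w $ 1 \<and> z $ 2 = w $ 2"
    by (intro digit_series_pair_inj avoiding_square_dyadic_avoiding)
  then show "z = w"
    by (simp add: vec_eq_iff forall_2)
qed

theorem theorem3:
  shows "\<exists>(A :: (real^2) set) (\<kappa> :: real^2 \<Rightarrow> real).
           compact A \<and> measure lebesgue A = 1/4 \<and> smooth \<kappa> \<and> inj_on \<kappa> A"
proof -
  define m where "m = measure lebesgue avoiding_square"
  define c where "c = 1 / (2 * sqrt m)"
  define A where "A = (\<lambda>z. c *\<^sub>R z) ` avoiding_square"
  define \<kappa> where "\<kappa> z = digit_series (\<lambda>n. digit_weight (2 * n)) (z $ 1 / c) +
    digit_series (\<lambda>n. digit_weight (2 * n + 1)) (z $ 2 / c)" for z :: "real^2"
  have "0 < m" "0 < c"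
    using measure_avoiding_square by (simp_all add: m_def c_def)
  have "compact A"
    unfolding A_def by (rule compact_scaling[OF compact_avoiding_square])
  moreover have "measure lebesgue A = c\<^sup>2 * m"
    using measure_lebesgue_affine[of c "0 :: real^2" avoiding_square] \<open>0 < c\<close> by (simp add: A_def m_def)
  then have "measure lebesgue A = 1/4"
    using \<open>0 < m\<close> by (simp add: c_def power_divide)
  moreover have scaled: "Cinf (\<lambda>x. digit_series (\<lambda>n. digit_weight (2 * n + j)) (x / c))" if "j \<le> 1" for j
  proof -
    have "Cinf (digit_series (\<lambda>n. digit_weight (2 * n + j)))"
      using that by (intro Cinf_digit_series) (auto intro: less_imp_le digit_weight_pos digit_weight_le_detector_bound)
    from Cinf_compose_affine[OF this, of "1 / c" 0] show ?thesis by simp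
  qed
  then have "smooth \<kappa>"
    unfolding \<kappa>_def by (intro smooth_add smooth_vec_nth) (use scaled[of 0] scaled[of 1] in simp_all)
  moreover have "inj_on \<kappa> A"
    unfolding A_def using inj_on_avoiding_square \<open>0 < c\<close> by (intro inj_on_imageI) (simp add: \<kappa>_def o_def)
  ultimately show ?thesis by blast
qed

end
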